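(* Let $G$ be a simple graph, not necessarily connected. Then the following are equivalent: (i) $\gamma(G)\le 1$; (ii) $G$ is $\{P_3,2P_2\}$-free, i.e. no induced subgraph of $G$ is isomorphic to the path $P_3$ on three vertices or to the disjoint union $2P_2$ of two edges; (iii) $G$ is the disjoint union of a complete graph and a trivial (edgeless) graph.
   Context: For a finite graph $G$ and indeterminates $X_G=\{x_u : u\in V(G)\}$, the generalized Laplacian matrix $L(G,X_G)$ is the $V(G)\times V(G)$ matrix over $\mathbb{Z}[X_G]$ with $(u,u)$-entry $x_u$ and $(u,v)$-entry $-m_{uv}$ for $u\ne v$, $m_{uv}$ being the number of edges between $u$ and $v$. The $i$-th critical ideal $I_i(G,X_G)$ is the ideal of $\mathbb{Z}[X_G]$ generated by all $i\times i$ minors of $L(G,X_G)$ (with $I_i=\langle1\rangle$ for $i<1$, $I_i=\langle 0\rangle$ for $i>|V(G)|$). The algebraic co-rank $\gamma(G)$ is the number of critical ideals of $G$ equal to $\langle 1\rangle$. *)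

theory Defs
  imports "HOL-Library.Poly_Mapping" "HOL-Combinatorics.Permutations"
begin

text \<open>Multivariate integer polynomials in indeterminates indexed by 'a:
  Z[X] is represented as (monomial => coefficient), with monomials ('a =>0 nat).\<close>
type_synonym 'a mpoly_int = "('a \<Rightarrow>\<^sub>0 nat) \<Rightarrow>\<^sub>0 int"

definition Var :: "'a \<Rightarrow> 'a mpoly_int" where
  "Var u = Poly_Mapping.single (Poly_Mapping.single u 1) 1"

definition simple_graph :: "'a set \<Rightarrow> ('a \<Rightarrow> 'a \<Rightarrow> bool) \<Rightarrow> bool" where
  "simple_graph V E \<longleftrightarrow> finite V \<and> (\<forall>u v. E u v \<longrightarrow> u \<in> V \<and> v \<in> V)
     \<and> (\<forall>u v. E u v \<longrightarrow> E v u) \<and> (\<forall>u. \<not> E u u)"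

definition gen_laplacian :: "('a \<Rightarrow> 'a \<Rightarrow> bool) \<Rightarrow> 'a \<Rightarrow> 'a \<Rightarrow> 'a mpoly_int" where
  "gen_laplacian E u v = (if u = v then Var u else - (if E u v then 1 else 0))"

definition det_k :: "nat \<Rightarrow> (nat \<Rightarrow> nat \<Rightarrow> 'b::comm_ring_1) \<Rightarrow> 'b" where
  "det_k k M = (\<Sum>p\<in>{p. p permutes {..<k}}. of_int (sign p) * (\<Prod>i<k. M i (p i)))"

definition minor :: "('a::linorder \<Rightarrow> 'a \<Rightarrow> 'b::comm_ring_1) \<Rightarrow> 'a set \<Rightarrow> 'a set \<Rightarrow> 'b" where
  "minor M R C = det_k (card R)
     (\<lambda>i j. M (sorted_list_of_set R ! i) (sorted_list_of_set C ! j))"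

definition ideal_gen :: "'b::comm_ring_1 set \<Rightarrow> 'b set" where
  "ideal_gen S = {x. \<exists>F c. finite F \<and> F \<subseteq> S \<and> x = (\<Sum>f\<in>F. c f * f)}"

definition critical_ideal :: "'a::linorder set \<Rightarrow> ('a \<Rightarrow> 'a \<Rightarrow> bool) \<Rightarrow> nat \<Rightarrow> 'a mpoly_int set" where
  "critical_ideal V E i =
     (if i < 1 then UNIV
      else if i > card V then {0}
      else ideal_gen {minor (gen_laplacian E) R C | R C.
                        R \<subseteq> V \<and> C \<subseteq> V \<and> card R = i \<and> card C = i})"

definition alg_corank :: "'a::linorder set \<Rightarrow> ('a \<Rightarrow> 'a \<Rightarrow> bool) \<Rightarrow> nat" where
  "alg_corank V E = card {i \<in> {1..card V}. critical_ideal V E i = UNIV}"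

definition P3_free :: "'a set \<Rightarrow> ('a \<Rightarrow> 'a \<Rightarrow> bool) \<Rightarrow> bool" where
  "P3_free V E \<longleftrightarrow> \<not> (\<exists>a\<in>V. \<exists>b\<in>V. \<exists>c\<in>V. distinct [a, b, c] \<and> E a b \<and> E b c \<and> \<not> E a c)"

definition twoP2_free :: "'a set \<Rightarrow> ('a \<Rightarrow> 'a \<Rightarrow> bool) \<Rightarrow> bool" where
  "twoP2_free V E \<longleftrightarrow> \<not> (\<exists>a\<in>V. \<exists>b\<in>V. \<exists>c\<in>V. \<exists>d\<in>V. distinct [a, b, c, d]
      \<and> E a b \<and> E c d \<and> \<not> E a c \<and> \<not> E a d \<and> \<not> E b c \<and> \<not> E b d)"

definition complete_plus_trivial :: "'a set \<Rightarrow> ('a \<Rightarrow> 'a \<Rightarrow> bool) \<Rightarrow> bool" where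
  "complete_plus_trivial V E \<longleftrightarrow>
     (\<exists>K \<subseteq> V. \<forall>u\<in>V. \<forall>v\<in>V. E u v \<longleftrightarrow> (u \<in> K \<and> v \<in> K \<and> u \<noteq> v))"

end

theory Submission
  imports Defs
begin

text \<open>Two small induced configurations already force \<open>\<gamma>(G) \<ge> 2\<close>: an edge \<open>ab\<close> gives
  the \<open>1 \<times> 1\<close> minor \<open>-1\<close>, and an induced \<open>P\<^sub>3\<close> \<open>a-b-c\<close> (rows \<open>a,b\<close>, columns \<open>b,c\<close>) or an
  induced \<open>2P\<^sub>2\<close> \<open>ab, cd\<close> (rows \<open>a,c\<close>, columns \<open>b,d\<close>) gives a \<open>2 \<times> 2\<close> minor \<open>\<plusminus>1\<close>.
  Conversely, if \<open>G\<close> is a clique \<open>K\<close> plus isolated vertices, substituting \<open>x\<^sub>u = -[u \<in> K]\<close>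
  turns \<open>L(G,X\<^sub>G)\<close> into the rank-one matrix \<open>-\<one>\<^sub>K \<one>\<^sub>K\<^sup>T\<close>, so every minor of size at least 2
  vanishes under this evaluation and no critical ideal beyond the first can be trivial.
  Finally, \<open>{P\<^sub>3, 2P\<^sub>2}\<close>-freeness says precisely that the non-isolated vertices form a clique.\<close>

definition monomial_eval :: "('a \<Rightarrow> int) \<Rightarrow> ('a \<Rightarrow>\<^sub>0 nat) \<Rightarrow> int" where
  "monomial_eval x m = (\<Prod>u\<in>Poly_Mapping.keys m. x u ^ Poly_Mapping.lookup m u)"

definition mpoly_eval :: "('a \<Rightarrow> int) \<Rightarrow> 'a mpoly_int \<Rightarrow> int" where
  "mpoly_eval x f = (\<Sum>m\<in>Poly_Mapping.keys f. Poly_Mapping.lookup f m * monomial_eval x m)"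

lemma monomial_eval_superset:
  assumes "finite S" "Poly_Mapping.keys m \<subseteq> S"
  shows "monomial_eval x m = (\<Prod>u\<in>S. x u ^ Poly_Mapping.lookup m u)"
  unfolding monomial_eval_def
  by (rule prod.mono_neutral_left) (use assms in \<open>auto simp: in_keys_iff\<close>)

lemma monomial_eval_zero [simp]: "monomial_eval x 0 = 1"
  by (simp add: monomial_eval_def)

lemma monomial_eval_add: "monomial_eval x (a + b) = monomial_eval x a * monomial_eval x b"
proof -
  let ?S = "Poly_Mapping.keys a \<union> Poly_Mapping.keys b"
  have "monomial_eval x (a + b) = (\<Prod>u\<in>?S. x u ^ Poly_Mapping.lookup (a + b) u)"
    by (rule monomial_eval_superset) (auto simp: keys_add)
  also have "\<dots> = (\<Prod>u\<in>?S. x u ^ Poly_Mapping.lookup a u) * (\<Prod>u\<in>?S. x u ^ Poly_Mapping.lookup b u)"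
    by (simp add: lookup_add power_add prod.distrib)
  also have "\<dots> = monomial_eval x a * monomial_eval x b"
    by (subst (1 2) monomial_eval_superset[of ?S]) auto
  finally show ?thesis .
qed

lemma mpoly_eval_single: "mpoly_eval x (Poly_Mapping.single m c) = c * monomial_eval x m"
  by (simp add: mpoly_eval_def)

lemma mpoly_eval_zero [simp]: "mpoly_eval x 0 = 0"
  by (simp add: mpoly_eval_def)

lemma mpoly_eval_add: "mpoly_eval x (f + g) = mpoly_eval x f + mpoly_eval x g"
  unfolding mpoly_eval_def by (rule setsum_keys_plus_distrib) (simp_all add: distrib_right)

lemma mpoly_eval_sum: "mpoly_eval x (sum h A) = (\<Sum>a\<in>A. mpoly_eval x (h a))"
  by (induction A rule: infinite_finite_induct) (auto simp: mpoly_eval_add)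

lemma poly_mapping_sum_single_keys:
  "f = (\<Sum>m\<in>Poly_Mapping.keys f. Poly_Mapping.single m (Poly_Mapping.lookup f m))"
  by (rule poly_mapping_eqI) (auto simp: lookup_sum lookup_single in_keys_iff when_def)

lemma mpoly_eval_mult: "mpoly_eval x (f * g) = mpoly_eval x f * mpoly_eval x g"
proof -
  let ?F = "Poly_Mapping.keys f" and ?G = "Poly_Mapping.keys g"
  have "f * g = (\<Sum>a\<in>?F. Poly_Mapping.single a (Poly_Mapping.lookup f a)) *
                (\<Sum>b\<in>?G. Poly_Mapping.single b (Poly_Mapping.lookup g b))"
    by (subst (1) poly_mapping_sum_single_keys, subst (2) poly_mapping_sum_single_keys) (rule refl)
  also have "\<dots> = (\<Sum>a\<in>?F. \<Sum>b\<in>?G.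
      Poly_Mapping.single (a + b) (Poly_Mapping.lookup f a * Poly_Mapping.lookup g b))"
    by (simp add: sum_product mult_single)
  finally have "mpoly_eval x (f * g) = (\<Sum>a\<in>?F. \<Sum>b\<in>?G.
      Poly_Mapping.lookup f a * Poly_Mapping.lookup g b * monomial_eval x (a + b))"
    by (simp add: mpoly_eval_sum mpoly_eval_single)
  also have "\<dots> = mpoly_eval x f * mpoly_eval x g"
    by (simp add: mpoly_eval_def monomial_eval_add sum_product mult_ac)
  finally show ?thesis .
qed

lemma mpoly_eval_of_int [simp]: "mpoly_eval x (of_int k) = k"
proof -
  have "(of_int k :: 'a mpoly_int) = Poly_Mapping.single 0 k"
    by (rule poly_mapping_eqI) (simp add: lookup_of_int lookup_single when_def)
  then show ?thesis by (simp add: mpoly_eval_single)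
qed

lemma mpoly_eval_one [simp]: "mpoly_eval x 1 = 1"
  using mpoly_eval_of_int[of x 1] by simp

lemma mpoly_eval_prod: "mpoly_eval x (prod h A) = (\<Prod>a\<in>A. mpoly_eval x (h a))"
  by (induction A rule: infinite_finite_induct) (auto simp: mpoly_eval_mult)

lemma mpoly_eval_uminus [simp]: "mpoly_eval x (- f) = - mpoly_eval x f"
  using mpoly_eval_add[of x f "- f"] by simp

lemma mpoly_eval_Var [simp]: "mpoly_eval x (Var u) = x u"
  by (simp add: Var_def mpoly_eval_single monomial_eval_def)

lemma mpoly_eval_det_k: "mpoly_eval x (det_k k M) = det_k k (\<lambda>i j. mpoly_eval x (M i j))"
  by (simp add: det_k_def mpoly_eval_sum mpoly_eval_mult mpoly_eval_prod)

lemma mpoly_eval_ideal_gen_eq_0: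
  assumes "\<And>s. s \<in> S \<Longrightarrow> mpoly_eval x s = 0" and "f \<in> ideal_gen S"
  shows "mpoly_eval x f = 0"
proof -
  obtain F c where "F \<subseteq> S" "f = (\<Sum>s\<in>F. c s * s)"
    using assms(2) unfolding ideal_gen_def by blast
  then show ?thesis
    using assms(1) by (auto simp: mpoly_eval_sum mpoly_eval_mult intro!: sum.neutral)
qed

lemma det_k_cong:
  assumes "\<And>i j. i < k \<Longrightarrow> j < k \<Longrightarrow> M i j = N i j"
  shows "det_k k M = det_k k N"
  unfolding det_k_def
proof (intro sum.cong arg_cong[where f = "\<lambda>t. _ * t"] prod.cong refl)
  fix p i assume "p \<in> {p. p permutes {..<k}}" "i \<in> {..<k}"
  then show "M i (p i) = N i (p i)" using assms permutes_in_image by fastforce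
qed

lemma det_k_1: "det_k 1 M = M 0 0"
proof -
  have "{p. p permutes {..<Suc 0}} = {id}" by (auto simp: lessThan_Suc)
  then show ?thesis by (simp add: det_k_def)
qed

lemma det_k_2: "det_k 2 M = M 0 0 * M 1 1 - M 0 1 * M 1 0"
proof -
  have two: "{..<(2::nat)} = insert 0 {1}" by auto
  have "{p. p permutes {1::nat}} = {id}" by auto
  then show ?thesis
    unfolding det_k_def two
    by (simp add: sum_over_permutations_insert sign_swap_id)
qed

lemma sum_sign_permutes_eq_0:
  assumes "2 \<le> (k::nat)"
  shows "(\<Sum>p\<in>{p. p permutes {..<k}}. sign p) = (0::int)"
proof -
  let ?t = "transpose (0::nat) 1"
  have t: "?t permutes {..<k}" using assms by (intro permutes_swap_id) auto
  have "(\<Sum>p\<in>{p. p permutes {..<k}}. sign p) = (\<Sum>p\<in>{p. p permutes {..<k}}. sign (p \<circ> ?t))"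
    by (rule sum_permutations_compose_right[OF t])
  also have "\<dots> = (\<Sum>p\<in>{p. p permutes {..<k}}. - sign p)"
  proof (intro sum.cong refl)
    fix p assume "p \<in> {p. p permutes {..<k}}"
    then have "permutation p" "permutation ?t"
      using t permutation_permutes by blast+
    then show "sign (p \<circ> ?t) = - sign p" by (simp add: sign_compose sign_swap_id)
  qed
  finally show ?thesis by (simp add: sum_negf)
qed

lemma det_k_rank_one:
  assumes "2 \<le> k"
  shows "det_k k (\<lambda>i j. f i * g j) = 0"
proof -
  have "det_k k (\<lambda>i j. f i * g j) =
      (\<Sum>p\<in>{p. p permutes {..<k}}. of_int (sign p) * ((\<Prod>i<k. f i) * (\<Prod>i<k. g i)))"
    unfolding det_k_def
  proof (intro sum.cong refl)
    fix p assume "p \<in> {p. p permutes {..<k}}"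
    then have "(\<Prod>i<k. g (p i)) = (\<Prod>i<k. g i)"
      using prod.permute[of p "{..<k}" g] by (simp add: comp_def)
    then show "of_int (sign p) * (\<Prod>i<k. f i * g (p i)) =
        of_int (sign p) * ((\<Prod>i<k. f i) * (\<Prod>i<k. g i))"
      by (simp add: prod.distrib)
  qed
  also have "\<dots> = of_int (\<Sum>p\<in>{p. p permutes {..<k}}. sign p) * ((\<Prod>i<k. f i) * (\<Prod>i<k. g i))"
    by (simp add: sum_distrib_right)
  finally show ?thesis by (simp add: sum_sign_permutes_eq_0[OF assms])
qed

lemma minor_singleton: "minor M {a} {b} = M a b"
  using det_k_1[of "\<lambda>i j. M ([a] ! i) ([b] ! j)"] by (simp add: minor_def)

lemma minor_doubleton:
  assumes "r1 \<noteq> r2" "c1 \<noteq> c2"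
  shows "minor M {r1, r2} {c1, c2} = M r1 c1 * M r2 c2 - M r1 c2 * M r2 c1
       \<or> minor M {r1, r2} {c1, c2} = - (M r1 c1 * M r2 c2 - M r1 c2 * M r2 c1)"
proof -
  have sorted: "sorted_list_of_set {a, b} = [a, b] \<or> sorted_list_of_set {a, b} = [b, a]"
    if "a \<noteq> b" for a b :: 'a
    using that by (cases "a < b") (auto simp: insert_commute neq_iff)
  have "card {r1, r2} = 2" using assms by simp
  then show ?thesis
    using sorted[OF assms(1)] sorted[OF assms(2)]
    unfolding minor_def by (elim disjE) (simp_all add: det_k_2 algebra_simps)
qed

lemma ideal_gen_eq_UNIV:
  assumes "s \<in> S" "s dvd 1"
  shows "ideal_gen S = UNIV"
proof -
  obtain t where st: "1 = s * t" using assms(2) by (rule dvdE)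
  have "y \<in> ideal_gen S" for y
  proof -
    have "y = y * (s * t)" by (simp flip: st)
    also have "\<dots> = (y * t) * s" by (simp add: ac_simps)
    finally show ?thesis
      unfolding ideal_gen_def using assms(1)
      by (intro CollectI exI[of _ "{s}"] exI[of _ "\<lambda>_. y * t"]) simp
  qed
  then show ?thesis by blast
qed

lemma critical_ideal_eq_UNIV_if_unit_minor:
  assumes "finite V" "R \<subseteq> V" "C \<subseteq> V" "card R = i" "card C = i" "1 \<le> i"
    and "minor (gen_laplacian E) R C \<in> {1, -1}"
  shows "critical_ideal V E i = UNIV"
proof -
  have "i \<le> card V" using card_mono[OF assms(1,2)] assms(4) by simp
  moreover have "minor (gen_laplacian E) R C dvd 1"
    using assms(7) by auto
  ultimately show ?thesis
    unfolding critical_ideal_def using assms(2-6)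
    by (auto intro!: ideal_gen_eq_UNIV[of "minor (gen_laplacian E) R C"])
qed

lemma alg_corank_ge_2_if_unit_2_minor:
  assumes "simple_graph V E" "E a b" and RC: "R \<subseteq> V" "C \<subseteq> V" "card R = 2" "card C = 2"
    and "minor (gen_laplacian E) R C \<in> {1, -1}"
  shows "2 \<le> alg_corank V E"
proof -
  have fin: "finite V" and ab: "a \<in> V" "b \<in> V" "a \<noteq> b"
    using assms(1,2) unfolding simple_graph_def by auto
  have "minor (gen_laplacian E) {a} {b} = -1"
    using assms(2) ab by (simp add: minor_singleton gen_laplacian_def)
  then have "critical_ideal V E 1 = UNIV"
    using fin ab by (intro critical_ideal_eq_UNIV_if_unit_minor[of V "{a}" "{b}"]) auto
  moreover have "critical_ideal V E 2 = UNIV"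
    using fin RC assms(7) by (intro critical_ideal_eq_UNIV_if_unit_minor) auto
  moreover have "2 \<le> card V" using card_mono[OF fin RC(1)] RC(3) by simp
  ultimately have "{1, 2} \<subseteq> {i \<in> {1..card V}. critical_ideal V E i = UNIV}" by auto
  from card_mono[OF _ this] show ?thesis unfolding alg_corank_def by simp
qed

lemma alg_corank_ge_2_if_not_free:
  assumes G: "simple_graph V E" and "\<not> (P3_free V E \<and> twoP2_free V E)"
  shows "2 \<le> alg_corank V E"
proof -
  let ?L = "gen_laplacian E"
  have L: "?L u v = (if E u v then -1 else 0)" if "u \<noteq> v" for u v
    using that by (simp add: gen_laplacian_def)
  consider "\<not> P3_free V E" | "\<not> twoP2_free V E" using assms(2) by blast
  then show ?thesis
  proof cases
    case 1
    then obtain a b c where abc: "a \<in> V" "b \<in> V" "c \<in> V" "distinct [a, b, c]"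
      "E a b" "E b c" "\<not> E a c"
      unfolding P3_free_def by blast
    then have "minor ?L {a, b} {b, c} \<in> {1, -1}"
      using minor_doubleton[of a b b c ?L] by (auto simp: L)
    with G abc show ?thesis by (intro alg_corank_ge_2_if_unit_2_minor[of V E a b]) auto
  next
    case 2
    then obtain a b c d where abcd: "a \<in> V" "b \<in> V" "c \<in> V" "d \<in> V" "distinct [a, b, c, d]"
      "E a b" "E c d" "\<not> E a c" "\<not> E a d" "\<not> E b c" "\<not> E b d"
      unfolding twoP2_free_def by blast
    then have "minor ?L {a, c} {b, d} \<in> {1, -1}"
      using minor_doubleton[of a c b d ?L] by (auto simp: L)
    with G abcd show ?thesis by (intro alg_corank_ge_2_if_unit_2_minor[of V E a b]) auto
  qed
qed

lemma sorted_list_of_set_nth_mem: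
  assumes "finite R" "j < card R"
  shows "sorted_list_of_set R ! j \<in> R"
  using assms nth_mem[of j "sorted_list_of_set R"] by simp

lemma alg_corank_le_1_if_complete_plus_trivial:
  assumes "simple_graph V E" "complete_plus_trivial V E"
  shows "alg_corank V E \<le> 1"
proof -
  have fin: "finite V" using assms(1) unfolding simple_graph_def by auto
  obtain K where K: "\<forall>u\<in>V. \<forall>v\<in>V. E u v \<longleftrightarrow> (u \<in> K \<and> v \<in> K \<and> u \<noteq> v)"
    using assms(2) unfolding complete_plus_trivial_def by auto
  define x where "x u = (if u \<in> K then -1 else 0 :: int)" for u
  define k where "k u = (if u \<in> K then 1 else 0 :: int)" for u
  have rank_one: "mpoly_eval x (gen_laplacian E u v) = - k u * k v" if "u \<in> V" "v \<in> V" for u v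
    using K that by (cases "u = v") (auto simp: gen_laplacian_def x_def k_def)
  have minor_vanishes: "mpoly_eval x (minor (gen_laplacian E) R C) = 0"
    if "R \<subseteq> V" "C \<subseteq> V" "card R = i" "card C = i" "2 \<le> i" for R C i
  proof -
    have "finite R" "finite C" using that(1,2) fin finite_subset by auto
    then have "mpoly_eval x (minor (gen_laplacian E) R C) =
        det_k i (\<lambda>a b. - k (sorted_list_of_set R ! a) * k (sorted_list_of_set C ! b))"
      unfolding minor_def mpoly_eval_det_k \<open>card R = i\<close>
      using that by (intro det_k_cong rank_one subsetD[OF that(1)] subsetD[OF that(2)]
          sorted_list_of_set_nth_mem) simp_all
    also have "\<dots> = 0" by (rule det_k_rank_one) fact
    finally show ?thesis .
  qed
  have nontrivial: "critical_ideal V E i \<noteq> UNIV" if "2 \<le> i" "i \<le> card V" for i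
  proof
    assume "critical_ideal V E i = UNIV"
    then have "1 \<in> ideal_gen {minor (gen_laplacian E) R C | R C.
        R \<subseteq> V \<and> C \<subseteq> V \<and> card R = i \<and> card C = i}"
      using that unfolding critical_ideal_def by simp
    then have "mpoly_eval x 1 = 0"
      by (rule mpoly_eval_ideal_gen_eq_0[rotated]) (use that(1) in \<open>auto intro: minor_vanishes\<close>)
    then show False by simp
  qed
  have "{i \<in> {1..card V}. critical_ideal V E i = UNIV} \<subseteq> {1}"
  proof
    fix i assume "i \<in> {i \<in> {1..card V}. critical_ideal V E i = UNIV}"
    then show "i \<in> {1}" using nontrivial[of i] by (cases "2 \<le> i") auto
  qed
  from card_mono[OF _ this] show ?thesis unfolding alg_corank_def by simp
qed

lemma non_isolated_adjacent_if_free: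
  assumes G: "simple_graph V E" and free: "P3_free V E" "twoP2_free V E"
    and uu': "E u u'" and vv': "E v v'" and "u \<noteq> v"
  shows "E u v"
proof (rule ccontr)
  assume uv: "\<not> E u v"
  (* P3-freeness excludes every edge between {u, u'} and {v, v'}, leaving an induced 2P2. *)
  have sym: "E p q \<Longrightarrow> E q p" and irr: "\<not> E p p" and inV: "E p q \<Longrightarrow> p \<in> V \<and> q \<in> V" for p q
    using G unfolding simple_graph_def by blast+
  have P3: "E p r" if "E p q" "E q r" "p \<noteq> r" for p q r
    using free(1) that inV irr unfolding P3_free_def by fastforce
  have "u' \<noteq> v" "v' \<noteq> u" using uv uu' vv' sym by auto
  have "\<not> E u v'" using P3[of u v' v] uv vv' sym \<open>u \<noteq> v\<close> by blast
  moreover have "\<not> E u' v" using P3[of u u' v] uv uu' \<open>u \<noteq> v\<close> by blast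
  moreover have "\<not> E u' v'" using P3[of u u' v'] \<open>\<not> E u v'\<close> uu' \<open>v' \<noteq> u\<close> by blast
  moreover have "distinct [u, u', v, v']"
    using calculation uu' vv' irr \<open>u \<noteq> v\<close> \<open>u' \<noteq> v\<close> \<open>v' \<noteq> u\<close> by auto
  ultimately show False
    using free(2) uu' vv' uv inV unfolding twoP2_free_def by blast
qed

lemma free_iff_complete_plus_trivial:
  assumes G: "simple_graph V E"
  shows "P3_free V E \<and> twoP2_free V E \<longleftrightarrow> complete_plus_trivial V E"
proof
  assume free: "P3_free V E \<and> twoP2_free V E"
  let ?K = "{w \<in> V. \<exists>w'. E w w'}"
  have "E u v \<longleftrightarrow> u \<in> ?K \<and> v \<in> ?K \<and> u \<noteq> v" if "u \<in> V" "v \<in> V" for u v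
  proof
    assume "E u v"
    then show "u \<in> ?K \<and> v \<in> ?K \<and> u \<noteq> v"
      using G that unfolding simple_graph_def by blast
  next
    assume "u \<in> ?K \<and> v \<in> ?K \<and> u \<noteq> v"
    then show "E u v"
      using non_isolated_adjacent_if_free[OF G] free by blast
  qed
  then show "complete_plus_trivial V E"
    unfolding complete_plus_trivial_def by (intro exI[of _ ?K]) auto
next
  assume "complete_plus_trivial V E"
  then show "P3_free V E \<and> twoP2_free V E"
    unfolding complete_plus_trivial_def P3_free_def twoP2_free_def by auto
qed

theorem corollary3p6:
  fixes V :: "'a::linorder set" and E :: "'a \<Rightarrow> 'a \<Rightarrow> bool"
  assumes "simple_graph V E"
  shows "(alg_corank V E \<le> 1 \<longleftrightarrow> P3_free V E \<and> twoP2_free V E)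
       \<and> (P3_free V E \<and> twoP2_free V E \<longleftrightarrow> complete_plus_trivial V E)"
  using free_iff_complete_plus_trivial[OF assms] alg_corank_ge_2_if_not_free[OF assms]
    alg_corank_le_1_if_complete_plus_trivial[OF assms]
  by fastforce

end
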